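(* Consider a finite tabular MDP with a unique optimal policy $\pi^*$ and full reachability ($d_\rho^\pi(s)\ge d_{\min}>0$ for all states $s$ and all full-support policies $\pi$). For any temperature $\eta\in(0,\infty)$, the discrete DG update $\pi_{t+1}(a|s)=\pi_t(a|s)e^{\alpha w_t(s,a)U_t(s,a)}/Z^t_s$ with sufficiently small step size $\alpha>0$ satisfies $V(\pi_t)\to V^*$ and $\pi_t\to\pi^*$.
   Context: A finite MDP $(\mathcal S,\mathcal A,P,r,\gamma,\rho)$ with $r(s,a)\in[0,1]$, $\gamma\in[0,1)$; tabular softmax policies $\pi_\theta(a|s)=e^{\theta(s,a)}/\sum_{a'}e^{\theta(s,a')}$. $V^\pi,Q^\pi$ are discounted value functions, $V(\pi)=\mathbb{E}_{s\sim\rho}V^\pi(s)$, $V^*=V(\pi^* )$, $d_\rho^\pi(s)=(1-\gamma)\sum_{t\ge0}\gamma^t\Pr(s_t=s\mid\rho,\pi)$. $U_t(s,a):=Q^{\pi_t}(s,a)-V^{\pi_t}(s)$, $\ell_t(s,a):=-\log\pi_t(a|s)$, $w_t(s,a):=\sigma(U_t(s,a)\ell_t(s,a)/\eta)$ with $\sigma(x)=1/(1+e^{-x})$, and $Z^t_s:=\sum_{a'}\pi_t(a'|s)e^{\alpha w_t(s,a')U_t(s,a')}$. *)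

theory Defs
  imports "HOL-Analysis.Analysis"
begin

text \<open>Finite tabular MDP. States have type 's, actions type 'a (both finite).
  P s a s' = P(s'|s,a), r s a = reward, \<rho> = initial distribution.
  A policy is pi s a = pi(a|s).\<close>

definition is_mdp ::
  "('s::finite \<Rightarrow> 'a::finite \<Rightarrow> 's \<Rightarrow> real) \<Rightarrow> ('s \<Rightarrow> 'a \<Rightarrow> real) \<Rightarrow> real \<Rightarrow> ('s \<Rightarrow> real) \<Rightarrow> bool" where
  "is_mdp P r \<gamma> \<rho> \<longleftrightarrow>
     (\<forall>s a s'. 0 \<le> P s a s') \<and> (\<forall>s a. (\<Sum>s'\<in>UNIV. P s a s') = 1) \<and>
     (\<forall>s a. 0 \<le> r s a \<and> r s a \<le> 1) \<and> 0 \<le> \<gamma> \<and> \<gamma> < 1 \<and>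
     (\<forall>s. 0 \<le> \<rho> s) \<and> (\<Sum>s\<in>UNIV. \<rho> s) = 1"

definition is_policy :: "('s::finite \<Rightarrow> 'a::finite \<Rightarrow> real) \<Rightarrow> bool" where
  "is_policy \<pi> \<longleftrightarrow> (\<forall>s a. 0 \<le> \<pi> s a) \<and> (\<forall>s. (\<Sum>a\<in>UNIV. \<pi> s a) = 1)"

definition full_support :: "('s::finite \<Rightarrow> 'a::finite \<Rightarrow> real) \<Rightarrow> bool" where
  "full_support \<pi> \<longleftrightarrow> is_policy \<pi> \<and> (\<forall>s a. 0 < \<pi> s a)"

definition softmax :: "('s \<Rightarrow> 'a::finite \<Rightarrow> real) \<Rightarrow> 's \<Rightarrow> 'a \<Rightarrow> real" where
  "softmax \<theta> s a = exp (\<theta> s a) / (\<Sum>a'\<in>UNIV. exp (\<theta> s a'))"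

fun state_dist ::
  "('s::finite \<Rightarrow> 'a::finite \<Rightarrow> 's \<Rightarrow> real) \<Rightarrow> ('s \<Rightarrow> 'a \<Rightarrow> real) \<Rightarrow> ('s \<Rightarrow> real) \<Rightarrow> nat \<Rightarrow> 's \<Rightarrow> real" where
  "state_dist P \<pi> \<mu> 0 = \<mu>"
| "state_dist P \<pi> \<mu> (Suc t) =
     (\<lambda>s'. \<Sum>s\<in>UNIV. state_dist P \<pi> \<mu> t s * (\<Sum>a\<in>UNIV. \<pi> s a * P s a s'))"

definition Vf ::
  "('s::finite \<Rightarrow> 'a::finite \<Rightarrow> 's \<Rightarrow> real) \<Rightarrow> ('s \<Rightarrow> 'a \<Rightarrow> real) \<Rightarrow> real \<Rightarrow> ('s \<Rightarrow> 'a \<Rightarrow> real) \<Rightarrow> 's \<Rightarrow> real" where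
  "Vf P r \<gamma> \<pi> s = (\<Sum>t. \<gamma> ^ t * (\<Sum>s'\<in>UNIV.
       state_dist P \<pi> (\<lambda>x. if x = s then 1 else 0) t s' * (\<Sum>a\<in>UNIV. \<pi> s' a * r s' a)))"

definition Qf ::
  "('s::finite \<Rightarrow> 'a::finite \<Rightarrow> 's \<Rightarrow> real) \<Rightarrow> ('s \<Rightarrow> 'a \<Rightarrow> real) \<Rightarrow> real \<Rightarrow> ('s \<Rightarrow> 'a \<Rightarrow> real) \<Rightarrow> 's \<Rightarrow> 'a \<Rightarrow> real" where
  "Qf P r \<gamma> \<pi> s a = r s a + \<gamma> * (\<Sum>s'\<in>UNIV. P s a s' * Vf P r \<gamma> \<pi> s')"

definition Vrho ::
  "('s::finite \<Rightarrow> 'a::finite \<Rightarrow> 's \<Rightarrow> real) \<Rightarrow> ('s \<Rightarrow> 'a \<Rightarrow> real) \<Rightarrow> real \<Rightarrow> ('s \<Rightarrow> real) \<Rightarrow> ('s \<Rightarrow> 'a \<Rightarrow> real) \<Rightarrow> real" where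
  "Vrho P r \<gamma> \<rho> \<pi> = (\<Sum>s\<in>UNIV. \<rho> s * Vf P r \<gamma> \<pi> s)"

definition disc_visit ::
  "('s::finite \<Rightarrow> 'a::finite \<Rightarrow> 's \<Rightarrow> real) \<Rightarrow> real \<Rightarrow> ('s \<Rightarrow> real) \<Rightarrow> ('s \<Rightarrow> 'a \<Rightarrow> real) \<Rightarrow> 's \<Rightarrow> real" where
  "disc_visit P \<gamma> \<rho> \<pi> s = (1 - \<gamma>) * (\<Sum>t. \<gamma> ^ t * state_dist P \<pi> \<rho> t s)"

definition optimal_policy ::
  "('s::finite \<Rightarrow> 'a::finite \<Rightarrow> 's \<Rightarrow> real) \<Rightarrow> ('s \<Rightarrow> 'a \<Rightarrow> real) \<Rightarrow> real \<Rightarrow> ('s \<Rightarrow> 'a \<Rightarrow> real) \<Rightarrow> bool" where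
  "optimal_policy P r \<gamma> \<pi> \<longleftrightarrow> is_policy \<pi> \<and>
     (\<forall>\<pi>'. is_policy \<pi>' \<longrightarrow> (\<forall>s. Vf P r \<gamma> \<pi>' s \<le> Vf P r \<gamma> \<pi> s))"

definition sigmoid :: "real \<Rightarrow> real" where
  "sigmoid x = 1 / (1 + exp (- x))"

definition adv ::
  "('s::finite \<Rightarrow> 'a::finite \<Rightarrow> 's \<Rightarrow> real) \<Rightarrow> ('s \<Rightarrow> 'a \<Rightarrow> real) \<Rightarrow> real \<Rightarrow> ('s \<Rightarrow> 'a \<Rightarrow> real) \<Rightarrow> 's \<Rightarrow> 'a \<Rightarrow> real" where
  "adv P r \<gamma> \<pi> s a = Qf P r \<gamma> \<pi> s a - Vf P r \<gamma> \<pi> s"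

definition dg_weight ::
  "('s::finite \<Rightarrow> 'a::finite \<Rightarrow> 's \<Rightarrow> real) \<Rightarrow> ('s \<Rightarrow> 'a \<Rightarrow> real) \<Rightarrow> real \<Rightarrow> real \<Rightarrow> ('s \<Rightarrow> 'a \<Rightarrow> real) \<Rightarrow> 's \<Rightarrow> 'a \<Rightarrow> real" where
  "dg_weight P r \<gamma> \<eta> \<pi> s a = sigmoid (adv P r \<gamma> \<pi> s a * (- ln (\<pi> s a)) / \<eta>)"

definition dg_step ::
  "('s::finite \<Rightarrow> 'a::finite \<Rightarrow> 's \<Rightarrow> real) \<Rightarrow> ('s \<Rightarrow> 'a \<Rightarrow> real) \<Rightarrow> real \<Rightarrow> real \<Rightarrow> real \<Rightarrow> ('s \<Rightarrow> 'a \<Rightarrow> real) \<Rightarrow> 's \<Rightarrow> 'a \<Rightarrow> real" where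
  "dg_step P r \<gamma> \<eta> \<alpha> \<pi> s a =
     \<pi> s a * exp (\<alpha> * dg_weight P r \<gamma> \<eta> \<pi> s a * adv P r \<gamma> \<pi> s a) /
     (\<Sum>a'\<in>UNIV. \<pi> s a' * exp (\<alpha> * dg_weight P r \<gamma> \<eta> \<pi> s a' * adv P r \<gamma> \<pi> s a'))"

fun dg_iter ::
  "('s::finite \<Rightarrow> 'a::finite \<Rightarrow> 's \<Rightarrow> real) \<Rightarrow> ('s \<Rightarrow> 'a \<Rightarrow> real) \<Rightarrow> real \<Rightarrow> real \<Rightarrow> real \<Rightarrow> ('s \<Rightarrow> 'a \<Rightarrow> real) \<Rightarrow> nat \<Rightarrow> 's \<Rightarrow> 'a \<Rightarrow> real" where
  "dg_iter P r \<gamma> \<eta> \<alpha> \<theta>0 0 = softmax \<theta>0"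
| "dg_iter P r \<gamma> \<eta> \<alpha> \<theta>0 (Suc t) = dg_step P r \<gamma> \<eta> \<alpha> (dg_iter P r \<gamma> \<eta> \<alpha> \<theta>0 t)"

end

(* A DG step multiplies pi(a|s) by exp (alpha w U) with w > 0, i.e. it moves
   probability towards actions of positive advantage; hence the new policy has nonnegative
   expected advantage under the old one, and by the performance-difference identity the values
   V(pi_t) increase to a limit Vlim.  Full reachability bounds the expected advantage at every
   state by the increment of V_rho(pi_t), so it tends to 0, and with it every term
   pi(a|s) (exp (alpha w U) - 1) U.  Consequently an action whose limit advantage Ulim is positive
   loses its probability (the term is of order pi U^2), and so does an action with negative Ulim
   (while its probability stays large, its weight w stays bounded below).  A positive Ulim is in
   fact impossible: eventually such an action is reweighted by more than the normaliser, so its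
   probability increases, contradicting its convergence to 0.  Hence Vlim dominates its own
   one-step lookahead, so Vlim = V*, and uniqueness of pi* forces pi*(s) to be the point mass at
   the single action with Ulim = 0, to which the iterates converge.  Nothing constrains the step
   size: the argument works for every alpha > 0. *)

theory Submission
  imports Defs
begin

type_synonym ('s, 'a) policy = "'s \<Rightarrow> 'a \<Rightarrow> real"

abbreviation dirac :: "'b \<Rightarrow> 'b \<Rightarrow> real" where
  "dirac x \<equiv> \<lambda>y. if y = x then 1 else 0"

lemma policy_le_1: "is_policy \<pi> \<Longrightarrow> \<pi> s a \<le> 1"
  using member_le_sum[of a UNIV "\<pi> s"] by (simp add: is_policy_def)

lemma neg_ln_policy_nonneg: "is_policy \<pi> \<Longrightarrow> 0 \<le> - ln (\<pi> s a)"
  using policy_le_1[of \<pi> s a] unfolding is_policy_def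
  by (cases "\<pi> s a = 0") (auto simp: order.strict_iff_order)

lemma eventually_incseq_not_tendsto_0:
  fixes X :: "nat \<Rightarrow> real"
  assumes mono: "eventually (\<lambda>n. X n \<le> X (Suc n)) sequentially" and pos: "\<And>n. 0 < X n"
  shows "\<not> X \<longlonglongrightarrow> 0"
proof
  assume lim: "X \<longlonglongrightarrow> 0"
  obtain N where N: "\<And>n. N \<le> n \<Longrightarrow> X n \<le> X (Suc n)"
    using mono by (auto simp: eventually_sequentially)
  have "X N \<le> X n" if "N \<le> n" for n
    using that by (induction n rule: dec_induct) (auto dest: N)
  then have "X N \<le> 0" by (intro LIMSEQ_le_const[OF lim]) auto
  with pos[of N] show False by simp
qed

lemma sigmoid_pos: "0 < sigmoid x"
  unfolding sigmoid_def by (simp add: add_pos_pos)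

lemma sigmoid_less_1: "sigmoid x < 1"
  unfolding sigmoid_def by (simp add: add_pos_pos)

lemma sigmoid_ge_half: "0 \<le> x \<Longrightarrow> 1/2 \<le> sigmoid x"
  unfolding sigmoid_def by (simp add: add_pos_pos field_simps)

lemma sigmoid_mono: "x \<le> y \<Longrightarrow> sigmoid x \<le> sigmoid y"
  unfolding sigmoid_def by (intro divide_left_mono add_pos_pos mult_pos_pos) auto

lemma softmax_full_support: "full_support (softmax \<theta>)"
proof -
  have Z: "0 < (\<Sum>a\<in>UNIV. exp (\<theta> s a))" for s by (rule sum_pos) auto
  have "0 < softmax \<theta> s a" for s a unfolding softmax_def using Z[of s] by simp
  moreover have "(\<Sum>a\<in>UNIV. softmax \<theta> s a) = 1" for s
    unfolding softmax_def using Z[of s] by (simp add: sum_divide_distrib[symmetric])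
  ultimately show ?thesis unfolding full_support_def is_policy_def by (auto simp: less_imp_le)
qed

locale finite_mdp =
  fixes P :: "'s::finite \<Rightarrow> 'a::finite \<Rightarrow> 's \<Rightarrow> real" and r :: "'s \<Rightarrow> 'a \<Rightarrow> real" and \<gamma> :: real
  assumes P_nonneg: "\<And>s a s'. 0 \<le> P s a s'" and sum_P: "\<And>s a. (\<Sum>s'\<in>UNIV. P s a s') = 1"
    and r_nonneg: "\<And>s a. 0 \<le> r s a" and r_le_1: "\<And>s a. r s a \<le> 1"
    and \<gamma>_nonneg: "0 \<le> \<gamma>" and \<gamma>_less_1: "\<gamma> < 1"

context finite_mdp
begin

abbreviation V :: "('s, 'a) policy \<Rightarrow> 's \<Rightarrow> real" where "V \<pi> \<equiv> Vf P r \<gamma> \<pi>"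
abbreviation Q :: "('s, 'a) policy \<Rightarrow> 's \<Rightarrow> 'a \<Rightarrow> real" where "Q \<pi> \<equiv> Qf P r \<gamma> \<pi>"
abbreviation U :: "('s, 'a) policy \<Rightarrow> 's \<Rightarrow> 'a \<Rightarrow> real" where "U \<pi> \<equiv> adv P r \<gamma> \<pi>"

definition trans_prob :: "('s, 'a) policy \<Rightarrow> 's \<Rightarrow> 's \<Rightarrow> real" where
  "trans_prob \<pi> s s' = (\<Sum>a\<in>UNIV. \<pi> s a * P s a s')"

definition policy_reward :: "('s, 'a) policy \<Rightarrow> 's \<Rightarrow> real" where
  "policy_reward \<pi> s = (\<Sum>a\<in>UNIV. \<pi> s a * r s a)"

definition disc_value :: "('s, 'a) policy \<Rightarrow> ('s \<Rightarrow> real) \<Rightarrow> 's \<Rightarrow> real" where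
  "disc_value \<pi> g s = (\<Sum>t. \<gamma> ^ t * (\<Sum>s'\<in>UNIV. state_dist P \<pi> (dirac s) t s' * g s'))"

definition bellman :: "('s, 'a) policy \<Rightarrow> ('s \<Rightarrow> real) \<Rightarrow> ('s \<Rightarrow> real) \<Rightarrow> 's \<Rightarrow> real" where
  "bellman \<pi> g W s = g s + \<gamma> * (\<Sum>s'\<in>UNIV. trans_prob \<pi> s s' * W s')"

definition lookahead :: "('s \<Rightarrow> real) \<Rightarrow> 's \<Rightarrow> 'a \<Rightarrow> real" where
  "lookahead W s a = r s a + \<gamma> * (\<Sum>s'\<in>UNIV. P s a s' * W s')"

lemma Vf_eq_disc_value: "V \<pi> s = disc_value \<pi> (policy_reward \<pi>) s"
  unfolding Vf_def disc_value_def policy_reward_def ..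

lemma Qf_eq_lookahead: "Q \<pi> s a = lookahead (V \<pi>) s a"
  unfolding Qf_def lookahead_def ..

lemma trans_prob_nonneg: "is_policy \<pi> \<Longrightarrow> 0 \<le> trans_prob \<pi> s s'"
  unfolding trans_prob_def is_policy_def by (auto intro!: sum_nonneg simp: P_nonneg)

lemma sum_trans_prob: "is_policy \<pi> \<Longrightarrow> (\<Sum>s'\<in>UNIV. trans_prob \<pi> s s') = 1"
  unfolding trans_prob_def is_policy_def
  by (simp add: sum.swap[of _ UNIV UNIV] sum_distrib_left[symmetric] sum_P)

lemma bellman_diff:
  "bellman \<pi> g W s - bellman \<pi> g W' s = bellman \<pi> (\<lambda>_. 0) (\<lambda>s. W s - W' s) s"
  unfolding bellman_def by (simp add: algebra_simps sum_subtractf)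

lemma bellman_const:
  "is_policy \<pi> \<Longrightarrow> bellman \<pi> g (\<lambda>_. c) s = g s + \<gamma> * c"
  unfolding bellman_def by (simp add: sum_distrib_right[symmetric] sum_trans_prob)

lemma sum_mult_lookahead:
  "(\<Sum>a\<in>UNIV. \<pi> s a * lookahead W s a) = bellman \<pi> (policy_reward \<pi>) W s"
proof -
  have "(\<Sum>a\<in>UNIV. \<pi> s a * lookahead W s a)
      = policy_reward \<pi> s + \<gamma> * (\<Sum>a\<in>UNIV. \<pi> s a * (\<Sum>s'\<in>UNIV. P s a s' * W s'))"
    unfolding lookahead_def policy_reward_def
    by (simp add: distrib_left sum.distrib sum_distrib_left mult.left_commute)
  also have "(\<Sum>a\<in>UNIV. \<pi> s a * (\<Sum>s'\<in>UNIV. P s a s' * W s'))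
      = (\<Sum>s'\<in>UNIV. trans_prob \<pi> s s' * W s')"
    unfolding trans_prob_def
    by (simp only: sum_distrib_left sum_distrib_right mult.assoc) (rule sum.swap)
  finally show ?thesis unfolding bellman_def .
qed

lemma state_dist_Suc_trans_prob:
  "state_dist P \<pi> \<mu> (Suc t) s' = (\<Sum>s\<in>UNIV. state_dist P \<pi> \<mu> t s * trans_prob \<pi> s s')"
  by (simp add: trans_prob_def)

lemma state_dist_nonneg: "is_policy \<pi> \<Longrightarrow> (\<And>s. 0 \<le> \<mu> s) \<Longrightarrow> 0 \<le> state_dist P \<pi> \<mu> t s"
  by (induction t arbitrary: s)
    (auto simp only: state_dist_Suc_trans_prob state_dist.simps(1)
      intro!: sum_nonneg mult_nonneg_nonneg trans_prob_nonneg)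

lemma sum_state_dist: "is_policy \<pi> \<Longrightarrow> (\<Sum>s\<in>UNIV. state_dist P \<pi> \<mu> t s) = (\<Sum>s\<in>UNIV. \<mu> s)"
proof (induction t)
  case (Suc t)
  have "(\<Sum>s'\<in>UNIV. state_dist P \<pi> \<mu> (Suc t) s')
      = (\<Sum>s\<in>UNIV. state_dist P \<pi> \<mu> t s * (\<Sum>s'\<in>UNIV. trans_prob \<pi> s s'))"
    by (simp only: state_dist_Suc_trans_prob sum_distrib_left) (rule sum.swap)
  with Suc show ?case by (simp add: sum_trans_prob)
qed simp

lemma state_dist_le_1:
  "is_policy \<pi> \<Longrightarrow> (\<And>s. 0 \<le> \<mu> s) \<Longrightarrow> (\<Sum>s\<in>UNIV. \<mu> s) = 1 \<Longrightarrow> state_dist P \<pi> \<mu> t s \<le> 1"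
  using member_le_sum[of s UNIV "state_dist P \<pi> \<mu> t"] state_dist_nonneg sum_state_dist by fastforce

lemma state_dist_Suc_shift:
  "state_dist P \<pi> \<mu> (Suc t) s' = state_dist P \<pi> (\<lambda>x. \<Sum>s\<in>UNIV. \<mu> s * trans_prob \<pi> s x) t s'"
proof (induction t arbitrary: s')
  case (Suc t)
  show ?case
    by (subst state_dist_Suc_trans_prob, subst (2) state_dist_Suc_trans_prob, simp only: Suc)
qed (simp only: state_dist_Suc_trans_prob state_dist.simps(1))

lemma state_dist_linear:
  "state_dist P \<pi> \<mu> t s' = (\<Sum>s\<in>UNIV. \<mu> s * state_dist P \<pi> (dirac s) t s')"
proof (induction t arbitrary: s')
  case (Suc t)
  show ?case
    by (simp only: state_dist_Suc_trans_prob Suc sum_distrib_left sum_distrib_right mult.assoc)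
      (rule sum.swap)
qed (simp add: mult_delta_right)

lemma state_dist_dirac_Suc:
  "state_dist P \<pi> (dirac s) (Suc t) s'
    = (\<Sum>s1\<in>UNIV. trans_prob \<pi> s s1 * state_dist P \<pi> (dirac s1) t s')"
proof -
  have "(\<lambda>x. \<Sum>y\<in>UNIV. dirac s y * trans_prob \<pi> y x) = trans_prob \<pi> s"
    by (simp add: mult_delta_left)
  then show ?thesis by (simp only: state_dist_Suc_shift) (rule state_dist_linear)
qed

subsection \<open>Discounted values of state rewards\<close>

lemma disc_value_sums:
  assumes pol: "is_policy \<pi>"
  shows "(\<lambda>t. \<gamma> ^ t * (\<Sum>s'\<in>UNIV. state_dist P \<pi> (dirac s) t s' * g s')) sums disc_value \<pi> g s"
proof -
  have bound: "norm (\<gamma> ^ t * (\<Sum>s'\<in>UNIV. state_dist P \<pi> (dirac s) t s' * g s'))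
      \<le> \<gamma> ^ t * (\<Sum>s'\<in>UNIV. \<bar>g s'\<bar>)"
    for t
  proof -
    have "\<bar>\<Sum>s'\<in>UNIV. state_dist P \<pi> (dirac s) t s' * g s'\<bar>
        \<le> (\<Sum>s'\<in>UNIV. \<bar>state_dist P \<pi> (dirac s) t s' * g s'\<bar>)"
      by (rule sum_abs)
    also have "\<dots> \<le> (\<Sum>s'\<in>UNIV. \<bar>g s'\<bar>)"
      using state_dist_nonneg[OF pol, of "dirac s"] state_dist_le_1[OF pol, of "dirac s"]
      by (intro sum_mono) (simp add: abs_mult mult_left_le_one_le)
    finally show ?thesis using \<gamma>_nonneg by (simp add: abs_mult mult_left_mono)
  qed
  have "summable (\<lambda>t. \<gamma> ^ t * (\<Sum>s'\<in>UNIV. \<bar>g s'\<bar>))"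
    using \<gamma>_nonneg \<gamma>_less_1 by (intro summable_mult2 summable_geometric) auto
  then have "summable (\<lambda>t. \<gamma> ^ t * (\<Sum>s'\<in>UNIV. state_dist P \<pi> (dirac s) t s' * g s'))"
    using bound by (rule summable_comparison_test')
  then show ?thesis unfolding disc_value_def by (rule summable_sums)
qed

lemma disc_value_fixpoint:
  assumes pol: "is_policy \<pi>"
  shows "disc_value \<pi> g s = bellman \<pi> g (disc_value \<pi> g) s"
proof -
  define f where "f s t = \<gamma> ^ t * (\<Sum>s'\<in>UNIV. state_dist P \<pi> (dirac s) t s' * g s')" for s t
  have f_Suc: "f s (Suc t) = \<gamma> * (\<Sum>s1\<in>UNIV. trans_prob \<pi> s s1 * f s1 t)" for t
  proof -
    have "(\<Sum>s'\<in>UNIV. state_dist P \<pi> (dirac s) (Suc t) s' * g s')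
        = (\<Sum>s'\<in>UNIV. (\<Sum>s1\<in>UNIV. trans_prob \<pi> s s1 * state_dist P \<pi> (dirac s1) t s') * g s')"
      by (simp only: state_dist_dirac_Suc)
    also have "\<dots>
        = (\<Sum>s1\<in>UNIV. trans_prob \<pi> s s1 * (\<Sum>s'\<in>UNIV. state_dist P \<pi> (dirac s1) t s' * g s'))"
      by (simp only: sum_distrib_left sum_distrib_right mult.assoc) (rule sum.swap)
    finally show ?thesis
      unfolding f_def by (simp add: sum_distrib_left mult_ac)
  qed
  have sums: "f s1 sums disc_value \<pi> g s1" for s1
    unfolding f_def by (rule disc_value_sums[OF pol])
  have "(\<lambda>t. f s (Suc t)) sums (\<gamma> * (\<Sum>s1\<in>UNIV. trans_prob \<pi> s s1 * disc_value \<pi> g s1))"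
    unfolding f_Suc by (intro sums_mult sums_sum sums)
  then have "f s sums (\<gamma> * (\<Sum>s1\<in>UNIV. trans_prob \<pi> s s1 * disc_value \<pi> g s1) + f s 0)"
    by (simp only: sums_Suc_iff)
  moreover have "f s 0 = g s" unfolding f_def by (simp add: mult_delta_left)
  ultimately show ?thesis
    using sums_unique2[OF sums] unfolding bellman_def by simp
qed

lemma bellman_mono:
  "is_policy \<pi> \<Longrightarrow> (\<And>s. W s \<le> W' s) \<Longrightarrow> bellman \<pi> g W s \<le> bellman \<pi> g W' s"
  unfolding bellman_def using \<gamma>_nonneg
  by (auto intro!: mult_left_mono sum_mono trans_prob_nonneg)

lemma bellman_max_principle:
  assumes pol: "is_policy \<pi>" and D: "\<And>s. D s \<le> bellman \<pi> (\<lambda>_. 0) D s"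
  shows "D s \<le> 0"
proof -
  have "Max (range D) \<in> range D" by (rule Max_in) auto
  then obtain s0 where "D s0 = Max (range D)" by (metis rangeE)
  then have max: "D x \<le> D s0" for x by simp
  have "D s0 \<le> bellman \<pi> (\<lambda>_. 0) (\<lambda>_. D s0) s0"
    using D[of s0] bellman_mono[OF pol max] by (rule order_trans)
  then have "D s0 \<le> \<gamma> * D s0" by (simp add: bellman_const[OF pol])
  then have "D s0 \<le> 0" using \<gamma>_less_1 by (simp add: mult_le_cancel_right1)
  then show ?thesis using max[of s] by simp
qed

lemma le_disc_value:
  assumes pol: "is_policy \<pi>" and W: "\<And>s. W s \<le> bellman \<pi> g W s"
  shows "W s \<le> disc_value \<pi> g s"
proof -
  have "W s - disc_value \<pi> g s \<le> 0"
  proof (rule bellman_max_principle[OF pol])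
    fix s
    show "W s - disc_value \<pi> g s \<le> bellman \<pi> (\<lambda>_. 0) (\<lambda>s. W s - disc_value \<pi> g s) s"
      using W[of s] disc_value_fixpoint[OF pol, of g s] bellman_diff[of \<pi> g W s "disc_value \<pi> g"]
      by linarith
  qed
  then show ?thesis by simp
qed

lemma disc_value_le:
  assumes pol: "is_policy \<pi>" and W: "\<And>s. bellman \<pi> g W s \<le> W s"
  shows "disc_value \<pi> g s \<le> W s"
proof -
  have "disc_value \<pi> g s - W s \<le> 0"
  proof (rule bellman_max_principle[OF pol])
    fix s
    show "disc_value \<pi> g s - W s \<le> bellman \<pi> (\<lambda>_. 0) (\<lambda>s. disc_value \<pi> g s - W s) s"
      using W[of s] disc_value_fixpoint[OF pol, of g s] bellman_diff[of \<pi> g "disc_value \<pi> g" s W]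
      by linarith
  qed
  then show ?thesis by simp
qed

lemma disc_value_unique:
  "is_policy \<pi> \<Longrightarrow> (\<And>s. W s = bellman \<pi> g W s) \<Longrightarrow> W s = disc_value \<pi> g s"
  by (metis order_antisym order_refl le_disc_value disc_value_le)

lemma disc_value_nonneg:
  assumes pol: "is_policy \<pi>" and g: "\<And>s. 0 \<le> g s"
  shows "0 \<le> disc_value \<pi> g s"
  using le_disc_value[OF pol, of "\<lambda>_. 0"] g by (simp add: bellman_const[OF pol])

definition Vmax :: real where "Vmax = 1 / (1 - \<gamma>)"

lemma Vmax_pos: "0 < Vmax"
  using \<gamma>_less_1 by (simp add: Vmax_def)

lemma Vmax_fixpoint: "1 + \<gamma> * Vmax = Vmax"
  using \<gamma>_less_1 by (simp add: Vmax_def field_simps)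

lemma policy_reward_bounds:
  assumes pol: "is_policy \<pi>"
  shows "0 \<le> policy_reward \<pi> s \<and> policy_reward \<pi> s \<le> 1"
proof -
  have "policy_reward \<pi> s \<le> (\<Sum>a\<in>UNIV. \<pi> s a * 1)"
    unfolding policy_reward_def using pol r_le_1
    by (intro sum_mono mult_left_mono) (auto simp: is_policy_def)
  with pol show ?thesis
    unfolding policy_reward_def by (auto simp: is_policy_def r_nonneg intro!: sum_nonneg)
qed

lemma Vf_fixpoint: "is_policy \<pi> \<Longrightarrow> V \<pi> s = bellman \<pi> (policy_reward \<pi>) (V \<pi>) s"
  unfolding Vf_eq_disc_value by (rule disc_value_fixpoint)

lemma Vf_eq_sum_Qf: "is_policy \<pi> \<Longrightarrow> V \<pi> s = (\<Sum>a\<in>UNIV. \<pi> s a * Q \<pi> s a)"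
  unfolding Qf_eq_lookahead sum_mult_lookahead by (rule Vf_fixpoint)

lemma sum_adv_eq_0: "is_policy \<pi> \<Longrightarrow> (\<Sum>a\<in>UNIV. \<pi> s a * U \<pi> s a) = 0"
  using Vf_eq_sum_Qf[of \<pi> s]
  by (simp add: adv_def right_diff_distrib sum_subtractf sum_distrib_right[symmetric] is_policy_def)

lemma Vf_bounds:
  assumes pol: "is_policy \<pi>"
  shows "0 \<le> V \<pi> s \<and> V \<pi> s \<le> Vmax"
proof -
  have "0 \<le> disc_value \<pi> (policy_reward \<pi>) s"
    using policy_reward_bounds[OF pol] by (intro disc_value_nonneg[OF pol]) auto
  moreover have "disc_value \<pi> (policy_reward \<pi>) s \<le> Vmax"
  proof (rule disc_value_le[OF pol])
    fix s
    show "bellman \<pi> (policy_reward \<pi>) (\<lambda>_. Vmax) s \<le> Vmax"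
      using policy_reward_bounds[OF pol, of s] Vmax_fixpoint by (simp add: bellman_const[OF pol])
  qed
  ultimately show ?thesis by (simp add: Vf_eq_disc_value)
qed

lemma lookahead_bounds:
  assumes W: "\<And>s. 0 \<le> W s \<and> W s \<le> Vmax"
  shows "0 \<le> lookahead W s a \<and> lookahead W s a \<le> Vmax"
proof -
  have "0 \<le> (\<Sum>s'\<in>UNIV. P s a s' * W s')"
    using W P_nonneg by (auto intro: sum_nonneg)
  moreover have "(\<Sum>s'\<in>UNIV. P s a s' * W s') \<le> (\<Sum>s'\<in>UNIV. P s a s' * Vmax)"
    using W P_nonneg by (intro sum_mono mult_left_mono) auto
  ultimately have "0 \<le> \<gamma> * (\<Sum>s'\<in>UNIV. P s a s' * W s') \<and> \<gamma> * (\<Sum>s'\<in>UNIV. P s a s' * W s') \<le> \<gamma> * Vmax"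
    using \<gamma>_nonneg by (simp add: sum_distrib_right[symmetric] sum_P mult_left_mono)
  then show ?thesis
    unfolding lookahead_def using r_nonneg[of s a] r_le_1[of s a] Vmax_fixpoint by linarith
qed

lemma abs_adv_le:
  assumes pol: "is_policy \<pi>"
  shows "\<bar>U \<pi> s a\<bar> \<le> Vmax"
proof -
  have "0 \<le> Q \<pi> s a \<and> Q \<pi> s a \<le> Vmax"
    unfolding Qf_eq_lookahead by (rule lookahead_bounds) (rule Vf_bounds[OF pol])
  then show ?thesis
    using Vf_bounds[OF pol, of s] unfolding adv_def by linarith
qed

subsection \<open>Performance difference\<close>

definition adv_gain :: "('s, 'a) policy \<Rightarrow> ('s, 'a) policy \<Rightarrow> 's \<Rightarrow> real" where
  "adv_gain \<pi>' \<pi> s = (\<Sum>a\<in>UNIV. \<pi>' s a * U \<pi> s a)"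

lemma bellman_Vf_eq_adv_gain:
  assumes pol': "is_policy \<pi>'"
  shows "bellman \<pi>' (policy_reward \<pi>') (V \<pi>) s = V \<pi> s + adv_gain \<pi>' \<pi> s"
proof -
  have "bellman \<pi>' (policy_reward \<pi>') (V \<pi>) s = (\<Sum>a\<in>UNIV. \<pi>' s a * (U \<pi> s a + V \<pi> s))"
    unfolding sum_mult_lookahead[symmetric] Qf_eq_lookahead[symmetric] adv_def by simp
  also have "\<dots> = V \<pi> s + adv_gain \<pi>' \<pi> s"
    using pol'
    by (simp add: adv_gain_def distrib_left sum.distrib sum_distrib_right[symmetric] is_policy_def)
  finally show ?thesis .
qed

lemma Vf_diff_eq_disc_value:
  assumes pol': "is_policy \<pi>'"
  shows "V \<pi>' s - V \<pi> s = disc_value \<pi>' (adv_gain \<pi>' \<pi>) s"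
proof (rule disc_value_unique[OF pol'])
  fix s
  show "V \<pi>' s - V \<pi> s = bellman \<pi>' (adv_gain \<pi>' \<pi>) (\<lambda>s. V \<pi>' s - V \<pi> s) s"
    using Vf_fixpoint[OF pol', of s] bellman_Vf_eq_adv_gain[OF pol', of \<pi> s]
    by (simp add: bellman_def algebra_simps sum_subtractf)
qed

lemma Vf_mono_if_adv_gain_nonneg:
  "is_policy \<pi>' \<Longrightarrow> (\<And>s. 0 \<le> adv_gain \<pi>' \<pi> s) \<Longrightarrow> V \<pi> s \<le> V \<pi>' s"
  using Vf_diff_eq_disc_value disc_value_nonneg by (metis diff_ge_0_iff_ge)

lemma sum_disc_value_eq_disc_visit:
  assumes pol: "is_policy \<pi>" and \<rho>_nonneg: "\<And>s. 0 \<le> \<rho> s" and sum_\<rho>: "(\<Sum>s\<in>UNIV. \<rho> s) = 1"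
  shows "(\<Sum>s\<in>UNIV. \<rho> s * disc_value \<pi> g s) = (\<Sum>s\<in>UNIV. disc_visit P \<gamma> \<rho> \<pi> s * g s) / (1 - \<gamma>)"
proof -
  have visit: "(\<lambda>t. \<gamma> ^ t * state_dist P \<pi> \<rho> t s') sums (disc_visit P \<gamma> \<rho> \<pi> s' / (1 - \<gamma>))" for s'
  proof -
    have "norm (\<gamma> ^ t * state_dist P \<pi> \<rho> t s') \<le> \<gamma> ^ t" for t
      using state_dist_nonneg[OF pol \<rho>_nonneg] state_dist_le_1[OF pol \<rho>_nonneg sum_\<rho>] \<gamma>_nonneg
      by (simp add: abs_mult mult_left_le)
    then have "summable (\<lambda>t. \<gamma> ^ t * state_dist P \<pi> \<rho> t s')"
      using \<gamma>_nonneg \<gamma>_less_1 by (intro summable_comparison_test'[OF summable_geometric]) auto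
    then show ?thesis
      using \<gamma>_less_1 unfolding disc_visit_def by (simp add: summable_sums)
  qed
  have "(\<Sum>s\<in>UNIV. \<rho> s * (\<gamma> ^ t * (\<Sum>s'\<in>UNIV. state_dist P \<pi> (dirac s) t s' * g s')))
      = (\<Sum>s'\<in>UNIV. g s' * (\<gamma> ^ t * state_dist P \<pi> \<rho> t s'))" for t
  proof -
    have "(\<Sum>s\<in>UNIV. \<rho> s * (\<gamma> ^ t * (\<Sum>s'\<in>UNIV. state_dist P \<pi> (dirac s) t s' * g s')))
        = (\<Sum>s'\<in>UNIV. \<Sum>s\<in>UNIV. \<rho> s * (\<gamma> ^ t * (state_dist P \<pi> (dirac s) t s' * g s')))"
      by (simp only: sum_distrib_left) (rule sum.swap)
    also have "\<dots> = (\<Sum>s'\<in>UNIV. g s' * (\<gamma> ^ t * (\<Sum>s\<in>UNIV. \<rho> s * state_dist P \<pi> (dirac s) t s')))"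
      by (simp add: sum_distrib_left mult_ac)
    finally show ?thesis by (simp only: state_dist_linear[of \<pi> \<rho>, symmetric])
  qed
  moreover have "(\<lambda>t. \<Sum>s\<in>UNIV. \<rho> s * (\<gamma> ^ t * (\<Sum>s'\<in>UNIV. state_dist P \<pi> (dirac s) t s' * g s')))
      sums (\<Sum>s\<in>UNIV. \<rho> s * disc_value \<pi> g s)"
    by (intro sums_sum sums_mult disc_value_sums pol)
  moreover have "(\<lambda>t. \<Sum>s'\<in>UNIV. g s' * (\<gamma> ^ t * state_dist P \<pi> \<rho> t s'))
      sums (\<Sum>s'\<in>UNIV. g s' * (disc_visit P \<gamma> \<rho> \<pi> s' / (1 - \<gamma>)))"
    by (intro sums_sum sums_mult visit)
  ultimately show ?thesis
    by (simp add: sums_unique2 sum_divide_distrib mult.commute)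
qed

lemma Vrho_diff_eq_disc_visit:
  assumes "is_policy \<pi>'" "\<And>s. 0 \<le> \<rho> s" "(\<Sum>s\<in>UNIV. \<rho> s) = 1"
  shows "Vrho P r \<gamma> \<rho> \<pi>' - Vrho P r \<gamma> \<rho> \<pi>
    = (\<Sum>s\<in>UNIV. disc_visit P \<gamma> \<rho> \<pi>' s * adv_gain \<pi>' \<pi> s) / (1 - \<gamma>)"
  using sum_disc_value_eq_disc_visit[OF assms, of "adv_gain \<pi>' \<pi>"]
    Vf_diff_eq_disc_value[OF assms(1)]
  by (simp add: Vrho_def right_diff_distrib[symmetric] sum_subtractf[symmetric])

lemma Vf_le_if_lookahead_le:
  assumes pol: "is_policy \<pi>" and W: "\<And>s a. lookahead W s a \<le> W s"
  shows "V \<pi> s \<le> W s"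
  unfolding Vf_eq_disc_value
proof (rule disc_value_le[OF pol])
  fix s
  have "bellman \<pi> (policy_reward \<pi>) W s = (\<Sum>a\<in>UNIV. \<pi> s a * lookahead W s a)"
    by (rule sum_mult_lookahead[symmetric])
  also have "\<dots> \<le> (\<Sum>a\<in>UNIV. \<pi> s a * W s)"
    using pol W by (intro sum_mono mult_left_mono) (auto simp: is_policy_def)
  also have "\<dots> = W s"
    using pol by (simp add: sum_distrib_right[symmetric] is_policy_def)
  finally show "bellman \<pi> (policy_reward \<pi>) W s \<le> W s" .
qed

text \<open>Switching the optimal policy at \<open>s\<close> to an action of zero advantage does not change
  its value function, so by uniqueness the optimal policy must already be that switch.\<close>

lemma optimal_policy_eq_dirac_if_adv_eq_0:
  assumes opt: "optimal_policy P r \<gamma> \<pi>star"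
    and unique: "\<And>\<pi>. optimal_policy P r \<gamma> \<pi> \<Longrightarrow> \<pi> = \<pi>star"
    and zero: "U \<pi>star s b = 0"
  shows "\<pi>star s = dirac b"
proof -
  define \<pi>' where "\<pi>' = \<pi>star(s := dirac b)"
  have pol: "is_policy \<pi>star" using opt by (simp add: optimal_policy_def)
  then have pol': "is_policy \<pi>'" by (simp add: \<pi>'_def is_policy_def)
  have "(\<Sum>a\<in>UNIV. \<pi>' x a * Q \<pi>star x a) = V \<pi>star x" for x
  proof (cases "x = s")
    case True
    then show ?thesis using zero by (simp add: \<pi>'_def mult_delta_left adv_def)
  next
    case False
    then show ?thesis using Vf_eq_sum_Qf[OF pol, of x] by (simp add: \<pi>'_def)
  qed
  then have "V \<pi>star x = bellman \<pi>' (policy_reward \<pi>') (V \<pi>star) x" for x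
    by (simp add: Qf_eq_lookahead sum_mult_lookahead)
  then have "V \<pi>star x = V \<pi>' x" for x
    unfolding Vf_eq_disc_value[of \<pi>'] by (rule disc_value_unique[OF pol'])
  with opt pol' have "optimal_policy P r \<gamma> \<pi>'" by (simp add: optimal_policy_def)
  then have "\<pi>' = \<pi>star" by (rule unique)
  then show ?thesis by (metis \<pi>'_def fun_upd_same)
qed

end

subsection \<open>The DG update\<close>

locale dg_update = finite_mdp P r \<gamma> for P :: "'s::finite \<Rightarrow> 'a::finite \<Rightarrow> 's \<Rightarrow> real" and r \<gamma> +
  fixes \<eta> \<alpha> :: real
  assumes \<eta>_pos: "0 < \<eta>" and \<alpha>_pos: "0 < \<alpha>"
begin

abbreviation w :: "('s, 'a) policy \<Rightarrow> 's \<Rightarrow> 'a \<Rightarrow> real" where "w \<pi> \<equiv> dg_weight P r \<gamma> \<eta> \<pi>"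
abbreviation step :: "('s, 'a) policy \<Rightarrow> ('s, 'a) policy" where "step \<pi> \<equiv> dg_step P r \<gamma> \<eta> \<alpha> \<pi>"

definition dg_factor :: "('s, 'a) policy \<Rightarrow> 's \<Rightarrow> 'a \<Rightarrow> real" where
  "dg_factor \<pi> s a = exp (\<alpha> * w \<pi> s a * U \<pi> s a)"

definition dg_normaliser :: "('s, 'a) policy \<Rightarrow> 's \<Rightarrow> real" where
  "dg_normaliser \<pi> s = (\<Sum>a\<in>UNIV. \<pi> s a * dg_factor \<pi> s a)"

definition dg_excess :: "('s, 'a) policy \<Rightarrow> 's \<Rightarrow> 'a \<Rightarrow> real" where
  "dg_excess \<pi> s a = \<pi> s a * ((dg_factor \<pi> s a - 1) * U \<pi> s a)"

lemma dg_step_eq: "step \<pi> s a = \<pi> s a * dg_factor \<pi> s a / dg_normaliser \<pi> s"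
  unfolding dg_step_def dg_factor_def dg_normaliser_def ..

lemma dg_weight_pos: "0 < w \<pi> s a"
  unfolding dg_weight_def by (rule sigmoid_pos)

lemma dg_weight_less_1: "w \<pi> s a < 1"
  unfolding dg_weight_def by (rule sigmoid_less_1)

lemma dg_weight_mult_adv_le: "0 \<le> u \<Longrightarrow> U \<pi> s a \<le> u \<Longrightarrow> w \<pi> s a * U \<pi> s a \<le> u"
  using dg_weight_pos[of \<pi> s a] dg_weight_less_1[of \<pi> s a]
  by (cases "0 \<le> U \<pi> s a")
    (auto intro: order_trans[OF mult_left_le_one_le] order_trans[OF less_imp_le[OF mult_pos_neg]])

lemma dg_factor_pos: "0 < dg_factor \<pi> s a"
  unfolding dg_factor_def by simp

lemma dg_factor_le: "0 \<le> u \<Longrightarrow> U \<pi> s a \<le> u \<Longrightarrow> dg_factor \<pi> s a \<le> exp (\<alpha> * u)"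
  unfolding dg_factor_def using dg_weight_mult_adv_le \<alpha>_pos by (simp add: mult.assoc)

lemma dg_factor_le_Vmax: "is_policy \<pi> \<Longrightarrow> dg_factor \<pi> s a \<le> exp (\<alpha> * Vmax)"
  using dg_factor_le Vmax_pos abs_adv_le by (metis abs_le_D1 less_imp_le)

lemma dg_excess_nonneg:
  assumes pol: "is_policy \<pi>"
  shows "0 \<le> dg_excess \<pi> s a"
proof -
  have "0 \<le> (dg_factor \<pi> s a - 1) * U \<pi> s a"
    using \<alpha>_pos dg_weight_pos[of \<pi> s a] unfolding dg_factor_def
    by (cases "0 \<le> U \<pi> s a") (auto simp: mult_nonpos_nonpos mult_nonneg_nonpos)
  with pol show ?thesis unfolding dg_excess_def is_policy_def by simp
qed

lemma dg_normaliser_pos: "full_support \<pi> \<Longrightarrow> 0 < dg_normaliser \<pi> s"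
  unfolding dg_normaliser_def full_support_def by (intro sum_pos) (auto intro: mult_pos_pos dg_factor_pos)

lemma dg_step_full_support:
  assumes fs: "full_support \<pi>"
  shows "full_support (step \<pi>)"
proof -
  have "0 < step \<pi> s a" for s a
    unfolding dg_step_eq using fs dg_normaliser_pos[OF fs] dg_factor_pos by (simp add: full_support_def)
  moreover have "(\<Sum>a\<in>UNIV. step \<pi> s a) = 1" for s
    unfolding dg_step_eq using dg_normaliser_pos[OF fs, of s]
    by (simp add: sum_divide_distrib[symmetric] dg_normaliser_def)
  ultimately show ?thesis by (auto simp: full_support_def is_policy_def less_imp_le)
qed

lemma adv_gain_dg_step:
  assumes fs: "full_support \<pi>"
  shows "adv_gain (step \<pi>) \<pi> s = (\<Sum>a\<in>UNIV. dg_excess \<pi> s a) / dg_normaliser \<pi> s"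
proof -
  have "(\<Sum>a\<in>UNIV. \<pi> s a * dg_factor \<pi> s a * U \<pi> s a)
      = (\<Sum>a\<in>UNIV. dg_excess \<pi> s a) + (\<Sum>a\<in>UNIV. \<pi> s a * U \<pi> s a)"
    unfolding dg_excess_def by (simp add: sum.distrib[symmetric] algebra_simps)
  also have "(\<Sum>a\<in>UNIV. \<pi> s a * U \<pi> s a) = 0"
    using fs by (simp add: sum_adv_eq_0 full_support_def)
  finally show ?thesis
    unfolding adv_gain_def dg_step_eq by (simp add: sum_divide_distrib[symmetric])
qed

lemma adv_gain_dg_step_nonneg: "full_support \<pi> \<Longrightarrow> 0 \<le> adv_gain (step \<pi>) \<pi> s"
  using dg_normaliser_pos[of \<pi> s] dg_excess_nonneg[of \<pi> s]
  by (simp add: adv_gain_dg_step full_support_def sum_nonneg)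

lemma Vf_dg_step_ge: "full_support \<pi> \<Longrightarrow> V \<pi> s \<le> V (step \<pi>) s"
  using dg_step_full_support adv_gain_dg_step_nonneg Vf_mono_if_adv_gain_nonneg
  by (simp add: full_support_def)

lemma dg_iter_full_support: "full_support (dg_iter P r \<gamma> \<eta> \<alpha> \<theta>0 t)"
  by (induction t) (simp_all add: softmax_full_support dg_step_full_support)

lemma dg_weight_ge_half: "is_policy \<pi> \<Longrightarrow> 0 \<le> U \<pi> s a \<Longrightarrow> 1/2 \<le> w \<pi> s a"
  unfolding dg_weight_def using \<eta>_pos neg_ln_policy_nonneg[of \<pi> s a]
  by (intro sigmoid_ge_half divide_nonneg_pos mult_nonneg_nonneg) auto

lemma dg_factor_ge_if_adv_nonneg:
  assumes pol: "is_policy \<pi>" and nonneg: "0 \<le> U \<pi> s a"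
  shows "exp (\<alpha> * U \<pi> s a / 2) \<le> dg_factor \<pi> s a"
proof -
  have "1/2 * U \<pi> s a \<le> w \<pi> s a * U \<pi> s a"
    by (rule mult_right_mono[OF dg_weight_ge_half[OF pol nonneg] nonneg])
  then show ?thesis
    unfolding dg_factor_def using \<alpha>_pos by (simp add: mult.assoc)
qed

lemma dg_excess_ge_if_adv_nonneg:
  assumes pol: "is_policy \<pi>" and nonneg: "0 \<le> U \<pi> s a"
  shows "\<pi> s a * (\<alpha> * (U \<pi> s a)\<^sup>2 / 2) \<le> dg_excess \<pi> s a"
proof -
  have "\<alpha> * U \<pi> s a / 2 \<le> dg_factor \<pi> s a - 1"
    using exp_ge_add_one_self[of "\<alpha> * U \<pi> s a / 2"] dg_factor_ge_if_adv_nonneg[OF pol nonneg]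
    by linarith
  from mult_right_mono[OF this nonneg]
  have "\<alpha> * (U \<pi> s a)\<^sup>2 / 2 \<le> (dg_factor \<pi> s a - 1) * U \<pi> s a"
    by (simp add: power2_eq_square)
  then show ?thesis
    unfolding dg_excess_def using pol by (intro mult_left_mono) (auto simp: is_policy_def)
qed

lemma dg_weight_ge:
  assumes pol: "is_policy \<pi>" and e: "0 < e" "e \<le> \<pi> s a"
  shows "sigmoid (Vmax * ln e / \<eta>) \<le> w \<pi> s a"
proof -
  have "Vmax * ln e \<le> - Vmax * - ln (\<pi> s a)"
    using e Vmax_pos by simp
  also have "\<dots> \<le> U \<pi> s a * - ln (\<pi> s a)"
    using abs_adv_le[OF pol, of s a] neg_ln_policy_nonneg[OF pol, of s a]
    by (intro mult_right_mono) auto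
  finally show ?thesis
    unfolding dg_weight_def using \<eta>_pos by (intro sigmoid_mono divide_right_mono) auto
qed

lemma dg_excess_ge_if_adv_neg:
  assumes pol: "is_policy \<pi>" and d: "0 < d" "U \<pi> s a \<le> - d" and e: "0 < e" "e \<le> \<pi> s a"
  shows "e * ((1 - exp (- (\<alpha> * sigmoid (Vmax * ln e / \<eta>) * d))) * d) \<le> dg_excess \<pi> s a"
proof -
  define c where "c = sigmoid (Vmax * ln e / \<eta>)"
  have "w \<pi> s a * U \<pi> s a \<le> c * U \<pi> s a"
    using dg_weight_ge[OF pol e] d by (intro mult_right_mono_neg) (auto simp: c_def)
  also have "\<dots> \<le> - (c * d)"
    using mult_left_mono[OF d(2) less_imp_le[OF sigmoid_pos]] by (simp add: c_def)
  finally have "\<alpha> * (w \<pi> s a * U \<pi> s a) \<le> \<alpha> * - (c * d)"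
    using \<alpha>_pos by (intro mult_left_mono) auto
  then have factor: "dg_factor \<pi> s a \<le> exp (- (\<alpha> * c * d))"
    unfolding dg_factor_def by (simp add: mult.assoc)
  moreover have "exp (- (\<alpha> * c * d)) \<le> 1"
    using \<alpha>_pos d sigmoid_pos[of "Vmax * ln e / \<eta>"] by (simp add: c_def)
  ultimately have q: "1 - exp (- (\<alpha> * c * d)) \<le> 1 - dg_factor \<pi> s a"
      "0 \<le> 1 - exp (- (\<alpha> * c * d))" "0 \<le> 1 - dg_factor \<pi> s a"
    by linarith+
  have "(1 - exp (- (\<alpha> * c * d))) * d \<le> (1 - dg_factor \<pi> s a) * - U \<pi> s a"
    using q d by (intro mult_mono) linarith+
  also have "\<dots> = (dg_factor \<pi> s a - 1) * U \<pi> s a"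
    by (simp add: algebra_simps)
  finally have "e * ((1 - exp (- (\<alpha> * c * d))) * d) \<le> \<pi> s a * ((dg_factor \<pi> s a - 1) * U \<pi> s a)"
    by (rule mult_mono[OF e(2)]) (use e q(2) d in \<open>auto intro: mult_nonneg_nonneg\<close>)
  then show ?thesis
    unfolding dg_excess_def c_def .
qed

lemma dg_normaliser_le:
  assumes pol: "is_policy \<pi>" and "0 \<le> u" "0 \<le> \<epsilon>"
    and small: "\<And>b. U \<pi> s b \<le> u \<or> \<pi> s b \<le> \<epsilon>"
  shows "dg_normaliser \<pi> s \<le> real CARD('a) * \<epsilon> * exp (\<alpha> * Vmax) + exp (\<alpha> * u)"
proof -
  have "\<pi> s b * dg_factor \<pi> s b \<le> \<epsilon> * exp (\<alpha> * Vmax) + \<pi> s b * exp (\<alpha> * u)" for b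
  proof -
    have p0: "0 \<le> \<pi> s b" using pol by (simp add: is_policy_def)
    consider "U \<pi> s b \<le> u" | "\<pi> s b \<le> \<epsilon>" using small by blast
    then show ?thesis
    proof cases
      case 1
      then have "\<pi> s b * dg_factor \<pi> s b \<le> \<pi> s b * exp (\<alpha> * u)"
        using p0 \<open>0 \<le> u\<close> by (intro mult_left_mono dg_factor_le)
      moreover have "0 \<le> \<epsilon> * exp (\<alpha> * Vmax)" using \<open>0 \<le> \<epsilon>\<close> by simp
      ultimately show ?thesis by linarith
    next
      case 2
      then have "\<pi> s b * dg_factor \<pi> s b \<le> \<epsilon> * exp (\<alpha> * Vmax)"
        by (rule mult_mono[OF _ dg_factor_le_Vmax[OF pol]])
          (use \<open>0 \<le> \<epsilon>\<close> dg_factor_pos in \<open>auto intro: less_imp_le\<close>)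
      moreover have "0 \<le> \<pi> s b * exp (\<alpha> * u)" using p0 by simp
      ultimately show ?thesis by linarith
    qed
  qed
  then have "dg_normaliser \<pi> s \<le> (\<Sum>b\<in>UNIV. \<epsilon> * exp (\<alpha> * Vmax) + \<pi> s b * exp (\<alpha> * u))"
    unfolding dg_normaliser_def by (rule sum_mono)
  also have "\<dots> = real CARD('a) * \<epsilon> * exp (\<alpha> * Vmax) + exp (\<alpha> * u)"
    using pol by (simp add: sum.distrib sum_distrib_right[symmetric] is_policy_def)
  finally show ?thesis .
qed

lemma dg_normaliser_le_Vmax: "is_policy \<pi> \<Longrightarrow> dg_normaliser \<pi> s \<le> exp (\<alpha> * Vmax)"
  using dg_normaliser_le[of \<pi> Vmax 0 s] Vmax_pos abs_adv_le by (force dest: abs_le_D1)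

lemma dg_step_ge_if_norm_le:
  "full_support \<pi> \<Longrightarrow> dg_normaliser \<pi> s \<le> dg_factor \<pi> s a \<Longrightarrow> \<pi> s a \<le> step \<pi> s a"
  using dg_normaliser_pos[of \<pi> s] mult_left_mono[of "dg_normaliser \<pi> s" "dg_factor \<pi> s a" "\<pi> s a"]
  by (simp add: dg_step_eq full_support_def le_divide_eq less_imp_le)

end

subsection \<open>Convergence of the DG iterates\<close>

locale dg_run = dg_update P r \<gamma> \<eta> \<alpha> for P :: "'s::finite \<Rightarrow> 'a::finite \<Rightarrow> 's \<Rightarrow> real" and r \<gamma> \<eta> \<alpha> +
  fixes \<theta>0 :: "('s, 'a) policy" and \<rho> :: "'s \<Rightarrow> real" and \<pi>star :: "('s, 'a) policy" and dmin :: real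
  assumes \<rho>_nonneg: "\<And>s. 0 \<le> \<rho> s" and sum_\<rho>: "(\<Sum>s\<in>UNIV. \<rho> s) = 1"
    and opt_optimal: "optimal_policy P r \<gamma> \<pi>star"
    and opt_unique: "\<And>\<pi>. optimal_policy P r \<gamma> \<pi> \<Longrightarrow> \<pi> = \<pi>star"
    and dmin_pos: "0 < dmin"
    and reach: "\<And>\<pi> s. full_support \<pi> \<Longrightarrow> dmin \<le> disc_visit P \<gamma> \<rho> \<pi> s"
begin

abbreviation pol :: "nat \<Rightarrow> ('s, 'a) policy" where "pol t \<equiv> dg_iter P r \<gamma> \<eta> \<alpha> \<theta>0 t"

lemma pol_full_support: "full_support (pol t)"
  by (rule dg_iter_full_support)

lemma pol_policy: "is_policy (pol t)"
  using pol_full_support by (simp add: full_support_def)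

lemma pol_pos: "0 < pol t s a"
  using pol_full_support by (simp add: full_support_def)

definition Vlim :: "'s \<Rightarrow> real" where
  "Vlim s = (SUP t. V (pol t) s)"

definition Ulim :: "'s \<Rightarrow> 'a \<Rightarrow> real" where
  "Ulim s a = lookahead Vlim s a - Vlim s"

lemma Vf_pol_le_opt: "V (pol t) s \<le> V \<pi>star s"
  using opt_optimal pol_policy by (simp add: optimal_policy_def)

lemma Vf_pol_tendsto: "(\<lambda>t. V (pol t) s) \<longlonglongrightarrow> Vlim s"
proof -
  have "incseq (\<lambda>t. V (pol t) s)"
    by (rule incseq_SucI) (simp add: Vf_dg_step_ge pol_full_support)
  then show ?thesis
    unfolding Vlim_def by (rule LIMSEQ_incseq_SUP[rotated]) (auto intro: bdd_aboveI2 Vf_pol_le_opt)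
qed

lemma Vlim_le: "Vlim s \<le> V \<pi>star s"
  by (rule LIMSEQ_le_const2[OF Vf_pol_tendsto]) (auto intro: Vf_pol_le_opt)

lemma adv_pol_tendsto: "(\<lambda>t. U (pol t) s a) \<longlonglongrightarrow> Ulim s a"
  unfolding adv_def Qf_eq_lookahead Ulim_def lookahead_def by (intro tendsto_intros Vf_pol_tendsto)

lemma Vrho_pol_tendsto_Vlim: "(\<lambda>t. Vrho P r \<gamma> \<rho> (pol t)) \<longlonglongrightarrow> (\<Sum>s\<in>UNIV. \<rho> s * Vlim s)"
  unfolding Vrho_def by (intro tendsto_intros Vf_pol_tendsto)

lemma adv_gain_pol_le:
  "adv_gain (pol (Suc t)) (pol t) s
    \<le> (1 - \<gamma>) / dmin * (Vrho P r \<gamma> \<rho> (pol (Suc t)) - Vrho P r \<gamma> \<rho> (pol t))"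
proof -
  have gain_nonneg: "0 \<le> adv_gain (pol (Suc t)) (pol t) s'" for s'
    using adv_gain_dg_step_nonneg[OF pol_full_support] by simp
  have visit_nonneg: "0 \<le> disc_visit P \<gamma> \<rho> (pol (Suc t)) s'" for s'
    using reach[OF pol_full_support, of "Suc t" s'] dmin_pos by linarith
  have "dmin * adv_gain (pol (Suc t)) (pol t) s
      \<le> disc_visit P \<gamma> \<rho> (pol (Suc t)) s * adv_gain (pol (Suc t)) (pol t) s"
    by (rule mult_right_mono[OF reach[OF pol_full_support] gain_nonneg])
  also have "\<dots> \<le> (\<Sum>s'\<in>UNIV. disc_visit P \<gamma> \<rho> (pol (Suc t)) s' * adv_gain (pol (Suc t)) (pol t) s')"
    by (intro member_le_sum mult_nonneg_nonneg visit_nonneg gain_nonneg) simp_all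
  also have "\<dots> = (1 - \<gamma>) * (Vrho P r \<gamma> \<rho> (pol (Suc t)) - Vrho P r \<gamma> \<rho> (pol t))"
    using Vrho_diff_eq_disc_visit[OF pol_policy \<rho>_nonneg sum_\<rho>, of "Suc t" "pol t"] \<gamma>_less_1 by simp
  finally show ?thesis
    using dmin_pos by (simp add: field_simps)
qed

lemma adv_gain_pol_tendsto_0: "(\<lambda>t. adv_gain (pol (Suc t)) (pol t) s) \<longlonglongrightarrow> 0"
proof (rule tendsto_sandwich[OF _ _ tendsto_const])
  show "eventually (\<lambda>t. 0 \<le> adv_gain (pol (Suc t)) (pol t) s) sequentially"
    using adv_gain_dg_step_nonneg[OF pol_full_support] by simp
  show "eventually (\<lambda>t. adv_gain (pol (Suc t)) (pol t) s
      \<le> (1 - \<gamma>) / dmin * (Vrho P r \<gamma> \<rho> (pol (Suc t)) - Vrho P r \<gamma> \<rho> (pol t))) sequentially"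
    by (intro always_eventually allI adv_gain_pol_le)
  have "(\<lambda>t. Vrho P r \<gamma> \<rho> (pol (Suc t)) - Vrho P r \<gamma> \<rho> (pol t)) \<longlonglongrightarrow> 0"
    using tendsto_diff[OF LIMSEQ_Suc[OF Vrho_pol_tendsto_Vlim] Vrho_pol_tendsto_Vlim] by simp
  then show "(\<lambda>t. (1 - \<gamma>) / dmin * (Vrho P r \<gamma> \<rho> (pol (Suc t)) - Vrho P r \<gamma> \<rho> (pol t))) \<longlonglongrightarrow> 0"
    by (rule tendsto_mult_right_zero)
qed

lemma dg_excess_pol_tendsto_0: "(\<lambda>t. dg_excess (pol t) s a) \<longlonglongrightarrow> 0"
proof (rule tendsto_sandwich[OF _ _ tendsto_const])
  show "eventually (\<lambda>t. 0 \<le> dg_excess (pol t) s a) sequentially"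
    by (simp add: dg_excess_nonneg pol_policy)
  show "eventually (\<lambda>t. dg_excess (pol t) s a
      \<le> exp (\<alpha> * Vmax) * adv_gain (pol (Suc t)) (pol t) s) sequentially"
  proof (intro always_eventually allI)
    fix t
    have "dg_excess (pol t) s a \<le> (\<Sum>b\<in>UNIV. dg_excess (pol t) s b)"
      by (rule member_le_sum) (auto simp: dg_excess_nonneg pol_policy)
    also have "\<dots> = dg_normaliser (pol t) s * adv_gain (pol (Suc t)) (pol t) s"
      using adv_gain_dg_step[OF pol_full_support] dg_normaliser_pos[OF pol_full_support, of t s] by simp
    also have "\<dots> \<le> exp (\<alpha> * Vmax) * adv_gain (pol (Suc t)) (pol t) s"
      by (rule mult_right_mono[OF dg_normaliser_le_Vmax[OF pol_policy]])
        (use adv_gain_dg_step_nonneg[OF pol_full_support] in simp)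
    finally show "dg_excess (pol t) s a \<le> exp (\<alpha> * Vmax) * adv_gain (pol (Suc t)) (pol t) s" .
  qed
  show "(\<lambda>t. exp (\<alpha> * Vmax) * adv_gain (pol (Suc t)) (pol t) s) \<longlonglongrightarrow> 0"
    using tendsto_mult_right_zero[OF adv_gain_pol_tendsto_0] by simp
qed

lemma pol_tendsto_0_if_Ulim_pos:
  assumes pos: "0 < Ulim s a"
  shows "(\<lambda>t. pol t s a) \<longlonglongrightarrow> 0"
proof (rule tendsto_sandwich[OF _ _ tendsto_const])
  define c where "c = \<alpha> * (Ulim s a / 2)\<^sup>2 / 2"
  have c: "0 < c" using pos \<alpha>_pos by (simp add: c_def)
  show "eventually (\<lambda>t. 0 \<le> pol t s a) sequentially"
    by (simp add: pol_pos less_imp_le)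
  have "eventually (\<lambda>t. Ulim s a / 2 < U (pol t) s a) sequentially"
    using order_tendstoD(1)[OF adv_pol_tendsto[of s a], of "Ulim s a / 2"] pos by simp
  then show "eventually (\<lambda>t. pol t s a \<le> dg_excess (pol t) s a / c) sequentially"
  proof eventually_elim
    case (elim t)
    then have "c \<le> \<alpha> * (U (pol t) s a)\<^sup>2 / 2"
      unfolding c_def using pos \<alpha>_pos by (intro divide_right_mono mult_left_mono power_mono) auto
    then have "pol t s a * c \<le> pol t s a * (\<alpha> * (U (pol t) s a)\<^sup>2 / 2)"
      using pol_pos[of t s a] by (simp add: mult_left_mono)
    also have "\<dots> \<le> dg_excess (pol t) s a"
      using elim pos by (intro dg_excess_ge_if_adv_nonneg[OF pol_policy]) simp
    finally have "pol t s a * c \<le> dg_excess (pol t) s a" .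
    then show ?case using c by (simp add: field_simps)
  qed
  show "(\<lambda>t. dg_excess (pol t) s a / c) \<longlonglongrightarrow> 0"
    using tendsto_divide[OF dg_excess_pol_tendsto_0 tendsto_const, of c] c by simp
qed

lemma pol_tendsto_0_if_Ulim_neg:
  assumes neg: "Ulim s a < 0"
  shows "(\<lambda>t. pol t s a) \<longlonglongrightarrow> 0"
proof (rule order_tendstoI)
  show "eventually (\<lambda>t. y < pol t s a) sequentially" if "y < 0" for y
    using that pol_pos[of _ s a] by (auto intro: always_eventually less_trans)
next
  fix e :: real
  assume e: "0 < e"
  define d where "d = - Ulim s a / 2"
  have d: "0 < d" using neg by (simp add: d_def)
  define bound where "bound = e * ((1 - exp (- (\<alpha> * sigmoid (Vmax * ln e / \<eta>) * d))) * d)"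
  have "0 < bound"
    unfolding bound_def using e d \<alpha>_pos sigmoid_pos[of "Vmax * ln e / \<eta>"] by simp
  then have "eventually (\<lambda>t. dg_excess (pol t) s a < bound) sequentially"
    by (rule order_tendstoD(2)[OF dg_excess_pol_tendsto_0])
  moreover have "eventually (\<lambda>t. U (pol t) s a < - d) sequentially"
    using order_tendstoD(2)[OF adv_pol_tendsto[of s a], of "- d"] neg by (simp add: d_def)
  ultimately show "eventually (\<lambda>t. pol t s a < e) sequentially"
  proof eventually_elim
    case (elim t)
    show ?case
    proof (rule ccontr)
      assume "\<not> pol t s a < e"
      then have "bound \<le> dg_excess (pol t) s a"
        unfolding bound_def using elim d e by (intro dg_excess_ge_if_adv_neg[OF pol_policy]) auto
      with elim show False by simp
    qed
  qed
qed

lemma Ulim_nonpos: "Ulim s a \<le> 0"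
proof (rule ccontr)
  assume "\<not> Ulim s a \<le> 0"
  then have pos: "0 < Ulim s a" by simp
  define \<delta> where "\<delta> = Ulim s a"
  define \<epsilon> where "\<epsilon> = (exp (\<alpha> * \<delta> / 4) - exp (\<alpha> * \<delta> / 8)) / (real CARD('a) * exp (\<alpha> * Vmax))"
  have \<epsilon>: "0 < \<epsilon>"
    unfolding \<epsilon>_def \<delta>_def using pos \<alpha>_pos by (intro divide_pos_pos) auto
  have "eventually (\<lambda>t. \<delta> / 2 < U (pol t) s a) sequentially"
    using order_tendstoD(1)[OF adv_pol_tendsto[of s a], of "\<delta> / 2"] pos by (simp add: \<delta>_def)
  moreover have "eventually (\<lambda>t. \<forall>b. U (pol t) s b \<le> \<delta> / 8 \<or> pol t s b \<le> \<epsilon>) sequentially"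
  proof (rule eventually_all_finite)
    fix b
    show "eventually (\<lambda>t. U (pol t) s b \<le> \<delta> / 8 \<or> pol t s b \<le> \<epsilon>) sequentially"
    proof (cases "Ulim s b < \<delta> / 8")
      case True
      then show ?thesis
        using order_tendstoD(2)[OF adv_pol_tendsto True] by (auto elim: eventually_mono)
    next
      case False
      then have "0 < Ulim s b" using pos by (simp add: \<delta>_def)
      then show ?thesis
        using order_tendstoD(2)[OF pol_tendsto_0_if_Ulim_pos[OF \<open>0 < Ulim s b\<close>] \<epsilon>]
        by (auto elim: eventually_mono)
    qed
  qed
  ultimately have "eventually (\<lambda>t. pol t s a \<le> pol (Suc t) s a) sequentially"
  proof eventually_elim
    case (elim t)
    have "dg_normaliser (pol t) s \<le> real CARD('a) * \<epsilon> * exp (\<alpha> * Vmax) + exp (\<alpha> * (\<delta> / 8))"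
      using elim(2) pos \<epsilon> by (intro dg_normaliser_le[OF pol_policy]) (auto simp: \<delta>_def)
    also have "\<dots> = exp (\<alpha> * (\<delta> / 2) / 2)"
      unfolding \<epsilon>_def by (simp add: field_simps)
    also have "\<dots> \<le> exp (\<alpha> * U (pol t) s a / 2)"
      using elim(1) \<alpha>_pos by simp
    also have "\<dots> \<le> dg_factor (pol t) s a"
      using elim(1) pos by (intro dg_factor_ge_if_adv_nonneg[OF pol_policy]) (simp add: \<delta>_def)
    finally show ?case
      by (simp add: dg_step_ge_if_norm_le pol_full_support)
  qed
  then have "\<not> (\<lambda>t. pol t s a) \<longlonglongrightarrow> 0"
    by (rule eventually_incseq_not_tendsto_0) (rule pol_pos)
  with pol_tendsto_0_if_Ulim_pos[OF pos] show False by contradiction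
qed

lemma is_policy_opt: "is_policy \<pi>star"
  using opt_optimal by (simp add: optimal_policy_def)

lemma Vlim_eq_opt: "Vlim = V \<pi>star"
proof
  fix s
  have "V \<pi>star s \<le> Vlim s"
    using Ulim_nonpos by (intro Vf_le_if_lookahead_le[OF is_policy_opt]) (simp add: Ulim_def)
  with Vlim_le show "Vlim s = V \<pi>star s" by (rule antisym)
qed

lemma Ulim_eq_adv_opt: "Ulim s a = U \<pi>star s a"
  unfolding Ulim_def adv_def Qf_eq_lookahead Vlim_eq_opt ..

lemma exists_Ulim_eq_0: "\<exists>b. Ulim s b = 0"
proof (rule ccontr)
  assume "\<nexists>b. Ulim s b = 0"
  then have "Ulim s b < 0" for b
    using Ulim_nonpos[of s b] by (auto simp: less_le)
  then have "(\<lambda>t. \<Sum>b\<in>UNIV. pol t s b) \<longlonglongrightarrow> 0"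
    by (intro tendsto_null_sum pol_tendsto_0_if_Ulim_neg)
  moreover have "(\<Sum>b\<in>UNIV. pol t s b) = 1" for t
    using pol_policy by (simp add: is_policy_def)
  ultimately show False
    using LIMSEQ_unique[OF tendsto_const] by force
qed

lemma opt_eq_dirac_if_Ulim_eq_0:
  assumes "Ulim s b = 0"
  shows "\<pi>star s = dirac b"
proof (rule optimal_policy_eq_dirac_if_adv_eq_0[OF opt_optimal])
  show "\<And>\<pi>. optimal_policy P r \<gamma> \<pi> \<Longrightarrow> \<pi> = \<pi>star" by (rule opt_unique)
  show "U \<pi>star s b = 0" using assms by (simp add: Ulim_eq_adv_opt)
qed

lemma pol_tendsto_opt: "(\<lambda>t. pol t s a) \<longlonglongrightarrow> \<pi>star s a"
proof -
  obtain b where "Ulim s b = 0" using exists_Ulim_eq_0 by blast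
  then have opt_s: "\<pi>star s = dirac b" by (rule opt_eq_dirac_if_Ulim_eq_0)
  have other: "(\<lambda>t. pol t s c) \<longlonglongrightarrow> 0" if "c \<noteq> b" for c
  proof -
    have "Ulim s c \<noteq> 0"
    proof
      assume "Ulim s c = 0"
      then have "\<pi>star s b = dirac c b" by (simp only: opt_eq_dirac_if_Ulim_eq_0)
      with opt_s that show False by simp
    qed
    with Ulim_nonpos[of s c] have "Ulim s c < 0" by simp
    then show ?thesis by (rule pol_tendsto_0_if_Ulim_neg)
  qed
  show ?thesis
  proof (cases "a = b")
    case True
    have "pol t s b = 1 - (\<Sum>c\<in>UNIV - {b}. pol t s c)" for t
      using sum.remove[of UNIV b "pol t s"] pol_policy[of t] by (simp add: is_policy_def)
    moreover have "(\<lambda>t. 1 - (\<Sum>c\<in>UNIV - {b}. pol t s c)) \<longlonglongrightarrow> 1 - (\<Sum>c\<in>UNIV - {b}. 0)"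
      by (intro tendsto_intros other) auto
    ultimately show ?thesis
      using True opt_s by simp
  next
    case False
    then show ?thesis using other opt_s by simp
  qed
qed

lemma Vrho_pol_tendsto_opt: "(\<lambda>t. Vrho P r \<gamma> \<rho> (pol t)) \<longlonglongrightarrow> Vrho P r \<gamma> \<rho> \<pi>star"
  using Vrho_pol_tendsto_Vlim unfolding Vlim_eq_opt Vrho_def .

end

theorem theorem8:
  fixes P :: "'s::finite \<Rightarrow> 'a::finite \<Rightarrow> 's \<Rightarrow> real"
    and r :: "'s \<Rightarrow> 'a \<Rightarrow> real" and \<gamma> :: real and \<rho> :: "'s \<Rightarrow> real"
    and \<pi>star :: "'s \<Rightarrow> 'a \<Rightarrow> real" and \<eta> :: real
  assumes mdp: "is_mdp P r \<gamma> \<rho>"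
    and opt: "optimal_policy P r \<gamma> \<pi>star"
    and unique: "\<And>\<pi>. optimal_policy P r \<gamma> \<pi> \<Longrightarrow> \<pi> = \<pi>star"
    and reach: "\<exists>dmin>0. \<forall>\<pi>. full_support \<pi> \<longrightarrow> (\<forall>s. dmin \<le> disc_visit P \<gamma> \<rho> \<pi> s)"
    and eta: "0 < \<eta>"
  shows "\<exists>\<alpha>0>0. \<forall>\<alpha>. 0 < \<alpha> \<and> \<alpha> < \<alpha>0 \<longrightarrow> (\<forall>\<theta>0.
           (\<lambda>t. Vrho P r \<gamma> \<rho> (dg_iter P r \<gamma> \<eta> \<alpha> \<theta>0 t)) \<longlonglongrightarrow> Vrho P r \<gamma> \<rho> \<pi>star \<and>
           (\<forall>s a. (\<lambda>t. dg_iter P r \<gamma> \<eta> \<alpha> \<theta>0 t s a) \<longlonglongrightarrow> \<pi>star s a))"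
proof -
  obtain dmin where dmin: "0 < dmin" "\<And>\<pi> s. full_support \<pi> \<Longrightarrow> dmin \<le> disc_visit P \<gamma> \<rho> \<pi> s"
    using reach by blast
  have "(\<lambda>t. Vrho P r \<gamma> \<rho> (dg_iter P r \<gamma> \<eta> \<alpha> \<theta>0 t)) \<longlonglongrightarrow> Vrho P r \<gamma> \<rho> \<pi>star \<and>
      (\<forall>s a. (\<lambda>t. dg_iter P r \<gamma> \<eta> \<alpha> \<theta>0 t s a) \<longlonglongrightarrow> \<pi>star s a)" if "0 < \<alpha>" for \<alpha> \<theta>0
  proof -
    interpret dg_run P r \<gamma> \<eta> \<alpha> \<theta>0 \<rho> \<pi>star dmin
      using mdp by unfold_locales (simp_all add: is_mdp_def eta that opt unique dmin)
    show ?thesis using Vrho_pol_tendsto_opt pol_tendsto_opt by blast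
  qed
  then show ?thesis by (intro exI[of _ 1]) auto
qed

end
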